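(* Let $\chi:\mathbb{R}\to\mathbb{R}$ be a kernel satisfying $(\chi_1)$ and $(\chi_2)$, and let $f\in AC(\mathbb{R})$. Then for every $w>0$, every $m\in\mathbb{N}$ with $m\ge1$, and every $t\in\mathbb{R}$, $$(\bar S^m_w f)'(t)=\frac1m\sum_{i=1}^m (K_w f')\left(t-\frac{m-2(i-1)}{2w}\right).$$
   Context: For $f:\mathbb{R}\to\mathbb{R}$, $V[f]$ denotes the Jordan variation of $f$ over $\mathbb{R}$ (supremum over compact intervals $[a,b]$ of the supremum over partitions $a=x_0<\dots<x_n=b$ of $\sum_i|f(x_i)-f(x_{i-1})|$); $BV(\mathbb{R})=\{f: V[f]<\infty\}$; $AC(\mathbb{R}):=BV(\mathbb{R})\cap AC_{loc}(\mathbb{R})$, where $AC_{loc}(\mathbb{R})$ is the set of functions absolutely continuous on every compact interval. A kernel $\chi:\mathbb{R}\to\mathbb{R}$ satisfies: $(\chi_1)$ $\chi\in L^1(\mathbb{R})$ is continuous and $\sum_{k\in\mathbb{Z}}\chi(u-k)=1$ for all $u\in\mathbb{R}$; $(\chi_2)$ $\sup_{u\in\mathbb{R}}\sum_{k\in\mathbb{Z}}|\chi(u-k)|<+\infty$, the series converging uniformly on compact sets. The averaged kernel is $\bar\chi_m(t):=\frac1m\int_{-m/2}^{m/2}\chi(t+v)\,dv$, and $(\bar S^m_w f)(t):=\sum_{k\in\mathbb{Z}} f(k/w)\,\bar\chi_m(wt-k)$, $t\in\mathbb{R}$, $w>0$. The sampling Kantorovich operators based on $\chi$ are $(K_w g)(t):=\sum_{k\in\mathbb{Z}}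 w\left(\int_{k/w}^{(k+1)/w} g(u)\,du\right)\chi(wt-k)$, $t\in\mathbb{R}$, $w>0$, for locally integrable $g$. *)

theory Defs
  imports "HOL-Analysis.Analysis"
begin

definition interval_variation :: "(real \<Rightarrow> real) \<Rightarrow> real \<Rightarrow> real \<Rightarrow> ereal" where
  "interval_variation f a b =
     (SUP p \<in> {(n, x). n \<ge> 1 \<and> x 0 = a \<and> x n = b \<and> (\<forall>i<n. x i < x (Suc i))}.
        ereal (\<Sum>i<fst p. \<bar>f (snd p (Suc i)) - f (snd p i)\<bar>))"

definition jordan_variation :: "(real \<Rightarrow> real) \<Rightarrow> ereal" where
  "jordan_variation f = (SUP ab \<in> {(a, b). a < b}. interval_variation f (fst ab) (snd ab))"

definition BV :: "(real \<Rightarrow> real) set" where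
  "BV = {f. jordan_variation f < \<infinity>}"

definition abs_cont_on_interval :: "real \<Rightarrow> real \<Rightarrow> (real \<Rightarrow> real) \<Rightarrow> bool" where
  "abs_cont_on_interval a b f \<longleftrightarrow>
     (\<forall>\<epsilon>>0. \<exists>\<delta>>0. \<forall>(n::nat) (l::nat \<Rightarrow> real) (r::nat \<Rightarrow> real).
        (\<forall>i<n. a \<le> l i \<and> l i < r i \<and> r i \<le> b) \<and>
        (\<forall>i<n. \<forall>j<n. i \<noteq> j \<longrightarrow> r i \<le> l j \<or> r j \<le> l i) \<and>
        (\<Sum>i<n. r i - l i) < \<delta> \<longrightarrow>
        (\<Sum>i<n. \<bar>f (r i) - f (l i)\<bar>) < \<epsilon>)"

definition AC_loc :: "(real \<Rightarrow> real) set" where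
  "AC_loc = {f. \<forall>a b. a \<le> b \<longrightarrow> abs_cont_on_interval a b f}"

definition AC :: "(real \<Rightarrow> real) set" where
  "AC = BV \<inter> AC_loc"

definition kernel_chi1 :: "(real \<Rightarrow> real) \<Rightarrow> bool" where
  "kernel_chi1 chi \<longleftrightarrow> integrable lborel chi \<and> continuous_on UNIV chi \<and>
     (\<forall>u. ((\<lambda>k::int. chi (u - real_of_int k)) has_sum 1) UNIV)"

definition kernel_chi2 :: "(real \<Rightarrow> real) \<Rightarrow> bool" where
  "kernel_chi2 chi \<longleftrightarrow>
     (\<exists>M. \<forall>u. (\<lambda>k::int. \<bar>chi (u - real_of_int k)\<bar>) summable_on UNIV \<and>
             (\<Sum>\<^sub>\<infinity>k::int. \<bar>chi (u - real_of_int k)\<bar>) \<le> M) \<and>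
     (\<forall>C. compact C \<longrightarrow>
        uniform_limit C (\<lambda>n u. \<Sum>k\<in>{- int n..int n}. \<bar>chi (u - real_of_int k)\<bar>)
                        (\<lambda>u. \<Sum>\<^sub>\<infinity>k::int. \<bar>chi (u - real_of_int k)\<bar>) sequentially)"

definition avg_kernel :: "(real \<Rightarrow> real) \<Rightarrow> nat \<Rightarrow> real \<Rightarrow> real" where
  "avg_kernel chi m t = (1 / real m) * integral {- real m / 2 .. real m / 2} (\<lambda>v. chi (t + v))"

definition Sbar :: "(real \<Rightarrow> real) \<Rightarrow> nat \<Rightarrow> real \<Rightarrow> (real \<Rightarrow> real) \<Rightarrow> real \<Rightarrow> real" where
  "Sbar chi m w f t = (\<Sum>\<^sub>\<infinity>k::int. f (real_of_int k / w) * avg_kernel chi m (w * t - real_of_int k))"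

definition Kant :: "(real \<Rightarrow> real) \<Rightarrow> real \<Rightarrow> (real \<Rightarrow> real) \<Rightarrow> real \<Rightarrow> real" where
  "Kant chi w g t = (\<Sum>\<^sub>\<infinity>k::int. w * integral {real_of_int k / w .. (real_of_int k + 1) / w} g
                                  * chi (w * t - real_of_int k))"

end

theory Submission
  imports Defs
begin

(*
  The averaged kernel is chi convolved with the normalised indicator of [-m/2, m/2], so its
  derivative is (chi (u + m/2) - chi (u - m/2)) / m.  Since the series of |chi (u - k)| converge
  uniformly on compact sets, the series defining Sbar may be differentiated term by term:
    (Sbar f)' (t) = w/m * (G_w f (t + m/(2w)) - G_w f (t - m/(2w))),
  where G_w f (t) = sum_k f (k/w) chi (w t - k) is the generalized sampling series.
  On the other hand f is absolutely continuous, so the mean of f' over [k/w, (k+1)/w] is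
  w (f ((k+1)/w) - f (k/w)); after the index shift k -> k + 1 this gives
  K_w f' (s) = w (G_w f (s + 1/w) - G_w f s), and the m Kantorovich values at the points
  t - (m - 2(i-1))/(2w), which are 1/w apart, telescope to the same difference.
*)

(* HOL-Analysis also provides Polynomial.content; here content is the volume of an interval. *)
hide_const (open) Polynomial.content

section \<open>Symmetric partial sums of series over the integers\<close>

lemma has_sum_diff:
  fixes f g :: "'a \<Rightarrow> 'b::topological_ab_group_add"
  assumes "(f has_sum a) A" and "(g has_sum b) A"
  shows "((\<lambda>x. f x - g x) has_sum (a - b)) A"
  using has_sum_add[OF assms(1), of "\<lambda>x. - g x" "- b"] assms(2) by (simp add: has_sum_uminus)

lemma summable_on_dominated:
  fixes g h :: "'a \<Rightarrow> real"
  assumes "h summable_on A" and "\<And>x. x \<in> A \<Longrightarrow> \<bar>g x\<bar> \<le> h x"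
  shows "g summable_on A"
proof -
  have "(\<lambda>x. norm (g x)) summable_on A"
    by (rule Infinite_Sum.abs_summable_on_comparison_test'[OF assms(1)]) (simp add: assms(2))
  then show ?thesis by (rule Infinite_Sum.abs_summable_summable)
qed

lemma abs_infsum_minus_sum_le:
  fixes g h :: "'a \<Rightarrow> real"
  assumes "h summable_on UNIV" and "\<And>x. \<bar>g x\<bar> \<le> h x" and "finite F"
  shows "\<bar>(\<Sum>\<^sub>\<infinity>x. g x) - sum g F\<bar> \<le> (\<Sum>\<^sub>\<infinity>x. h x) - sum h F"
proof -
  have "g summable_on UNIV"
    using summable_on_dominated[OF assms(1)] assms(2) by blast
  have abs_g: "(\<lambda>x. \<bar>g x\<bar>) summable_on UNIV"
    using summable_on_dominated[OF assms(1), of "\<lambda>x. \<bar>g x\<bar>"] assms(2) by simp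
  have "\<bar>(\<Sum>\<^sub>\<infinity>x. g x) - sum g F\<bar> = \<bar>\<Sum>\<^sub>\<infinity>x\<in>UNIV - F. g x\<bar>"
    using infsum_Diff[OF \<open>g summable_on UNIV\<close> summable_on_finite[OF \<open>finite F\<close>]] \<open>finite F\<close>
    by simp
  also have "\<dots> \<le> (\<Sum>\<^sub>\<infinity>x\<in>UNIV - F. \<bar>g x\<bar>)"
    using norm_infsum_bound[of g "UNIV - F"] summable_on_subset[OF abs_g, of "UNIV - F"] by simp
  also have "\<dots> \<le> (\<Sum>\<^sub>\<infinity>x\<in>UNIV - F. h x)"
    using summable_on_subset[OF abs_g] summable_on_subset[OF assms(1)] assms(2)
    by (intro infsum_mono) auto
  also have "\<dots> = (\<Sum>\<^sub>\<infinity>x. h x) - sum h F"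
    using infsum_Diff[OF assms(1) summable_on_finite[OF \<open>finite F\<close>]] \<open>finite F\<close>
    by simp
  finally show ?thesis .
qed

lemma filterlim_int_symmetric_at_top:
  "filterlim (\<lambda>n. {- int n..int n}) (finite_subsets_at_top (UNIV :: int set)) at_top"
  unfolding filterlim_finite_subsets_at_top
proof (safe, goal_cases)
  case (1 X)
  then obtain k where "abs ` X \<subseteq> {..k}"
    by (auto simp: finite_int_iff_bounded_le)
  then have "X \<subseteq> {- int n..int n}" if "nat k \<le> n" for n
    using that by (force simp: abs_le_iff)
  then show ?case
    unfolding eventually_sequentially by (intro exI[of _ "nat k"]) auto
qed

lemma tendsto_symmetric_partial_sums:
  fixes g :: "int \<Rightarrow> 'a::topological_comm_monoid_add"
  assumes "(g has_sum s) UNIV"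
  shows "(\<lambda>n. \<Sum>k\<in>{- int n..int n}. g k) \<longlonglongrightarrow> s"
  using filterlim_compose[OF assms[unfolded has_sum_def] filterlim_int_symmetric_at_top] .

lemma uniform_limit_symmetric_partial_sums_dominated:
  fixes g h :: "int \<Rightarrow> 'a \<Rightarrow> real"
  assumes "\<And>k x. x \<in> S \<Longrightarrow> \<bar>g k x\<bar> \<le> h k x"
    and "\<And>x. x \<in> S \<Longrightarrow> (\<lambda>k. h k x) summable_on UNIV"
    and "uniform_limit S (\<lambda>n x. \<Sum>k\<in>{- int n..int n}. h k x) (\<lambda>x. \<Sum>\<^sub>\<infinity>k. h k x) sequentially"
  shows "uniform_limit S (\<lambda>n x. \<Sum>k\<in>{- int n..int n}. g k x) (\<lambda>x. \<Sum>\<^sub>\<infinity>k. g k x) sequentially"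
proof (rule metric_uniform_limit_imp_uniform_limit[OF assms(3)], intro always_eventually allI ballI)
  fix n x assume "x \<in> S"
  have "\<bar>(\<Sum>\<^sub>\<infinity>k. g k x) - (\<Sum>k\<in>{- int n..int n}. g k x)\<bar>
      \<le> (\<Sum>\<^sub>\<infinity>k. h k x) - (\<Sum>k\<in>{- int n..int n}. h k x)"
    using assms(1,2) \<open>x \<in> S\<close> by (intro abs_infsum_minus_sum_le) auto
  then show "dist (\<Sum>k\<in>{- int n..int n}. g k x) (\<Sum>\<^sub>\<infinity>k. g k x)
      \<le> dist (\<Sum>k\<in>{- int n..int n}. h k x) (\<Sum>\<^sub>\<infinity>k. h k x)"
    by (simp add: dist_real_def abs_minus_commute)
qed

lemma has_real_derivative_symmetric_series:
  fixes a a' :: "int \<Rightarrow> real \<Rightarrow> real"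
  assumes "open S" and "convex S" and "t \<in> S"
    and der: "\<And>k x. x \<in> S \<Longrightarrow> (a k has_real_derivative a' k x) (at x)"
    and summable: "\<And>x. x \<in> S \<Longrightarrow> (\<lambda>k. a k x) summable_on UNIV"
    and unif: "uniform_limit S (\<lambda>n x. \<Sum>k\<in>{- int n..int n}. a' k x) D sequentially"
  shows "((\<lambda>x. \<Sum>\<^sub>\<infinity>k. a k x) has_real_derivative D t) (at t)"
proof -
  have partial: "(\<lambda>n. \<Sum>k\<in>{- int n..int n}. a k x) \<longlonglongrightarrow> (\<Sum>\<^sub>\<infinity>k. a k x)" if "x \<in> S" for x
    using summable[OF that] by (intro tendsto_symmetric_partial_sums) simp
  have derf: "((\<lambda>x. \<Sum>k\<in>{- int n..int n}. a k x) has_derivative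
      (\<lambda>h. (\<Sum>k\<in>{- int n..int n}. a' k x) * h)) (at x within S)" if "x \<in> S" for n x
  proof -
    have "((\<lambda>x. \<Sum>k\<in>{- int n..int n}. a k x) has_real_derivative (\<Sum>k\<in>{- int n..int n}. a' k x))
        (at x within S)"
      using that by (intro has_field_derivative_at_within[OF DERIV_sum] der)
    then show ?thesis by (simp add: has_field_derivative_def)
  qed
  have nle: "\<forall>\<^sub>F n in sequentially. \<forall>x\<in>S. \<forall>h.
      norm ((\<Sum>k\<in>{- int n..int n}. a' k x) * h - D x * h) \<le> e * norm h" if "e > 0" for e
  proof -
    have "\<forall>\<^sub>F n in sequentially. \<forall>x\<in>S. \<bar>(\<Sum>k\<in>{- int n..int n}. a' k x) - D x\<bar> < e"
      using uniform_limitD[OF unif that] by (simp add: dist_real_def)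
    then show ?thesis
      by eventually_elim (auto simp: left_diff_distrib[symmetric] abs_mult intro!: mult_right_mono)
  qed
  obtain g where g: "\<forall>x\<in>S. (\<lambda>n. \<Sum>k\<in>{- int n..int n}. a k x) \<longlonglongrightarrow> g x \<and>
      (g has_derivative (\<lambda>h. D x * h)) (at x within S)"
    using has_derivative_sequence[OF \<open>convex S\<close> derf nle \<open>t \<in> S\<close> partial[OF \<open>t \<in> S\<close>]] by blast
  have "g x = (\<Sum>\<^sub>\<infinity>k. a k x)" if "x \<in> S" for x
    using g partial[OF that] that LIMSEQ_unique by blast
  moreover have "(g has_real_derivative D t) (at t)"
    using g \<open>t \<in> S\<close> at_within_open[OF \<open>t \<in> S\<close> \<open>open S\<close>]
    unfolding has_field_derivative_def by metis
  ultimately show ?thesis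
    using \<open>open S\<close> \<open>t \<in> S\<close> by (auto intro: has_field_derivative_transform_within_open)
qed

section \<open>Absolutely continuous functions\<close>

lemma disjoint_greaterThanLessThan_imp_le:
  fixes l r l' r' :: real
  assumes "l < r" and "l' < r'" and "{l<..<r} \<inter> {l'<..<r'} = {}"
  shows "r \<le> l' \<or> r' \<le> l"
  using assms by (auto simp: max_def min_def split: if_splits)

lemma sum_intervals_reindex_nondegenerate:
  fixes l r :: "'i \<Rightarrow> real"
  assumes "finite I" and "\<forall>i\<in>I. l i \<le> r i"
  obtains h where "bij_betw h {..<card {i\<in>I. l i < r i}} {i\<in>I. l i < r i}"
    and "\<And>g :: real \<Rightarrow> real \<Rightarrow> real. (\<And>x. g x x = 0) \<Longrightarrow>
      (\<Sum>i\<in>I. g (l i) (r i)) = (\<Sum>k<card {i\<in>I. l i < r i}. g (l (h k)) (r (h k)))"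
proof -
  let ?J = "{i\<in>I. l i < r i}"
  obtain h where h: "bij_betw h {..<card ?J} ?J"
    using ex_bij_betw_nat_finite[of ?J] \<open>finite I\<close> by (auto simp: atLeast0LessThan)
  moreover have "(\<Sum>i\<in>I. g (l i) (r i)) = (\<Sum>k<card ?J. g (l (h k)) (r (h k)))"
    if "\<And>x. g x x = 0" for g :: "real \<Rightarrow> real \<Rightarrow> real"
  proof -
    have "(\<Sum>i\<in>I. g (l i) (r i)) = (\<Sum>i\<in>?J. g (l i) (r i))"
      using \<open>finite I\<close> assms(2) that by (intro sum.mono_neutral_right) (auto simp: order_le_less)
    also have "\<dots> = (\<Sum>k<card ?J. g (l (h k)) (r (h k)))"
      using sum.reindex_bij_betw[OF h, of "\<lambda>i. g (l i) (r i)"] by simp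
    finally show ?thesis .
  qed
  ultimately show thesis by (rule that)
qed

(* The definition speaks only of nondegenerate families indexed by an initial segment of nat:
   degenerate intervals are dropped and the remaining ones enumerated. *)
lemma abs_cont_on_interval_family:
  assumes "abs_cont_on_interval a b f" and "\<epsilon> > 0"
  shows "\<exists>\<delta>>0. \<forall>(I :: 'i set) l r. finite I \<longrightarrow> (\<forall>i\<in>I. a \<le> l i \<and> l i \<le> r i \<and> r i \<le> b) \<longrightarrow>
           (\<forall>i\<in>I. \<forall>j\<in>I. i \<noteq> j \<longrightarrow> {l i<..<r i} \<inter> {l j<..<r j} = {}) \<longrightarrow>
           (\<Sum>i\<in>I. r i - l i) < \<delta> \<longrightarrow> (\<Sum>i\<in>I. \<bar>f (r i) - f (l i)\<bar>) < \<epsilon>"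
proof -
  obtain \<delta> where "\<delta> > 0" and ac: "\<forall>(n::nat) (l::nat \<Rightarrow> real) (r::nat \<Rightarrow> real).
      (\<forall>i<n. a \<le> l i \<and> l i < r i \<and> r i \<le> b) \<and>
      (\<forall>i<n. \<forall>j<n. i \<noteq> j \<longrightarrow> r i \<le> l j \<or> r j \<le> l i) \<and>
      (\<Sum>i<n. r i - l i) < \<delta> \<longrightarrow> (\<Sum>i<n. \<bar>f (r i) - f (l i)\<bar>) < \<epsilon>"
    using assms unfolding abs_cont_on_interval_def by blast
  show ?thesis
  proof (intro exI[of _ \<delta>] conjI allI impI \<open>\<delta> > 0\<close>)
    fix I :: "'i set" and l r :: "'i \<Rightarrow> real"
    assume "finite I" and lr: "\<forall>i\<in>I. a \<le> l i \<and> l i \<le> r i \<and> r i \<le> b"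
      and disj: "\<forall>i\<in>I. \<forall>j\<in>I. i \<noteq> j \<longrightarrow> {l i<..<r i} \<inter> {l j<..<r j} = {}"
      and small: "(\<Sum>i\<in>I. r i - l i) < \<delta>"
    define J where "J = {i\<in>I. l i < r i}"
    obtain h where h: "bij_betw h {..<card J} J"
      and reindex: "\<And>g :: real \<Rightarrow> real \<Rightarrow> real. (\<And>x. g x x = 0) \<Longrightarrow>
        (\<Sum>i\<in>I. g (l i) (r i)) = (\<Sum>k<card J. g (l (h k)) (r (h k)))"
      using sum_intervals_reindex_nondegenerate[OF \<open>finite I\<close>, of l r] lr unfolding J_def by blast
    have hJ: "h k \<in> J" if "k < card J" for k
      using h that by (auto simp: bij_betw_def)
    have "\<forall>k<card J. a \<le> l (h k) \<and> l (h k) < r (h k) \<and> r (h k) \<le> b"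
      using hJ lr by (auto simp: J_def)
    moreover have "\<forall>k<card J. \<forall>k'<card J. k \<noteq> k' \<longrightarrow> r (h k) \<le> l (h k') \<or> r (h k') \<le> l (h k)"
    proof (intro allI impI)
      fix k k' assume "k < card J" "k' < card J" "k \<noteq> k'"
      then have "h k \<noteq> h k'" "h k \<in> J" "h k' \<in> J"
        using h hJ by (auto simp: bij_betw_def inj_on_def)
      then show "r (h k) \<le> l (h k') \<or> r (h k') \<le> l (h k)"
        using disj by (intro disjoint_greaterThanLessThan_imp_le) (auto simp: J_def)
    qed
    moreover have "(\<Sum>k<card J. r (h k) - l (h k)) < \<delta>"
      using small reindex[of "\<lambda>x y. y - x"] by simp
    ultimately have "(\<Sum>k<card J. \<bar>f (r (h k)) - f (l (h k))\<bar>) < \<epsilon>"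
      using ac[rule_format, of "card J" "\<lambda>k. l (h k)" "\<lambda>k. r (h k)"] by blast
    then show "(\<Sum>i\<in>I. \<bar>f (r i) - f (l i)\<bar>) < \<epsilon>"
      using reindex[of "\<lambda>x y. \<bar>f y - f x\<bar>"] by simp
  qed
qed

lemma gauge_straddle:
  fixes f g :: "real \<Rightarrow> real"
  assumes der: "\<And>x. x \<in> S \<Longrightarrow> (f has_real_derivative g x) (at x)" and "e > 0"
  obtains \<gamma> where "gauge \<gamma>"
    and "\<And>x u v. x \<in> S \<Longrightarrow> u \<le> x \<Longrightarrow> x \<le> v \<Longrightarrow> {u..v} \<subseteq> \<gamma> x \<Longrightarrow>
           \<bar>f v - f u - (v - u) * g x\<bar> \<le> e * (v - u)"
proof -
  have "\<exists>d>0. x \<in> S \<longrightarrow> (\<forall>y. \<bar>y - x\<bar> < d \<longrightarrow> \<bar>f y - f x - (y - x) * g x\<bar> \<le> e * \<bar>y - x\<bar>)" for x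
  proof (cases "x \<in> S")
    case True
    then have "(f has_derivative (\<lambda>h. g x * h)) (at x)"
      using der by (simp add: has_field_derivative_def)
    then show ?thesis using \<open>e > 0\<close> by (auto simp: has_derivative_at_alt mult.commute)
  qed (auto intro: exI[of _ 1])
  then obtain d where d: "\<And>x. d x > 0"
    and near: "\<And>x y. x \<in> S \<Longrightarrow> \<bar>y - x\<bar> < d x \<Longrightarrow> \<bar>f y - f x - (y - x) * g x\<bar> \<le> e * \<bar>y - x\<bar>"
    by metis
  show thesis
  proof (rule that)
    show "gauge (\<lambda>x. ball x (d x))" using d by (simp add: gauge_ball_dependent)
    fix x u v assume "x \<in> S" "u \<le> x" "x \<le> v" "{u..v} \<subseteq> ball x (d x)"
    moreover have "u \<in> {u..v}" "v \<in> {u..v}" using \<open>u \<le> x\<close> \<open>x \<le> v\<close> by auto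
    ultimately have "u \<in> ball x (d x)" "v \<in> ball x (d x)" by blast+
    then have "\<bar>u - x\<bar> < d x" "\<bar>v - x\<bar> < d x" by (auto simp: dist_real_def abs_minus_commute)
    have "\<bar>f v - f u - (v - u) * g x\<bar> = \<bar>(f v - f x - (v - x) * g x) - (f u - f x - (u - x) * g x)\<bar>"
      by (simp add: algebra_simps)
    also have "\<dots> \<le> \<bar>f v - f x - (v - x) * g x\<bar> + \<bar>f u - f x - (u - x) * g x\<bar>"
      by (rule abs_triangle_ineq4)
    also have "\<dots> \<le> e * \<bar>v - x\<bar> + e * \<bar>u - x\<bar>"
      using near \<open>x \<in> S\<close> \<open>\<bar>u - x\<bar> < d x\<close> \<open>\<bar>v - x\<bar> < d x\<close> by (meson add_mono)
    also have "\<dots> = e * (v - u)"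
      using \<open>u \<le> x\<close> \<open>x \<le> v\<close> by (simp add: algebra_simps)
    finally show "\<bar>f v - f u - (v - u) * g x\<bar> \<le> e * (v - u)" .
  qed
qed

lemma tagged_division_of_real_intervalE:
  fixes a b :: real
  assumes "p tagged_division_of {a..b}" and "(x, K) \<in> p"
  obtains u v where "K = {u..v}" "a \<le> u" "u \<le> x" "x \<le> v" "v \<le> b"
proof -
  obtain u v where K: "K = cbox u v"
    using tagged_division_ofD(4)[OF assms] by blast
  have "x \<in> K" "K \<subseteq> {a..b}"
    using tagged_division_ofD(2,3)[OF assms] by auto
  with K have "K = {u..v}" "a \<le> u" "u \<le> x" "x \<le> v" "v \<le> b"
    by auto
  then show thesis by (rule that)
qed

lemma tagged_division_of_real_snd:
  fixes a b :: real
  assumes "p tagged_division_of {a..b}" and "q \<in> p"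
  shows "snd q = {Inf (snd q)..Sup (snd q)}" and "a \<le> Inf (snd q)" and "Inf (snd q) \<le> Sup (snd q)"
    and "Sup (snd q) \<le> b" and "content (snd q) = Sup (snd q) - Inf (snd q)"
proof -
  obtain x K where q: "q = (x, K)" by (cases q)
  with assms(2) have "(x, K) \<in> p" by simp
  then obtain u v where "K = {u..v}" "a \<le> u" "u \<le> x" "x \<le> v" "v \<le> b"
    by (rule tagged_division_of_real_intervalE[OF assms(1)])
  with q show "snd q = {Inf (snd q)..Sup (snd q)}" and "a \<le> Inf (snd q)" and "Inf (snd q) \<le> Sup (snd q)"
    and "Sup (snd q) \<le> b" and "content (snd q) = Sup (snd q) - Inf (snd q)"
    by simp_all
qed

lemma tagged_division_of_real_disjoint:
  fixes a b :: real
  assumes "p tagged_division_of {a..b}" and "q \<in> p" and "q' \<in> p" and "q \<noteq> q'"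
  shows "{Inf (snd q)<..<Sup (snd q)} \<inter> {Inf (snd q')<..<Sup (snd q')} = {}"
proof -
  have "interior (snd q) \<inter> interior (snd q') = {}"
    using tagged_division_ofD(5)[OF assms(1), of "fst q" "snd q" "fst q'" "snd q'"] assms(2-4)
    by (simp add: prod_eq_iff)
  then show ?thesis
    using tagged_division_of_real_snd(1)[OF assms(1,2)] tagged_division_of_real_snd(1)[OF assms(1,3)]
    by (metis interior_atLeastAtMost_real)
qed

lemma sum_tag_lengths_eq_indicator_sum:
  fixes a b :: real
  assumes "p tagged_division_of {a..b}"
  shows "(\<Sum>q\<in>{q\<in>p. fst q \<in> E}. Sup (snd q) - Inf (snd q))
    = (\<Sum>(x, K)\<in>p. content K *\<^sub>R (indicator E x :: real))"
proof -
  have "finite p" using tagged_division_ofD(1)[OF assms] .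
  have "(\<Sum>q\<in>{q\<in>p. fst q \<in> E}. Sup (snd q) - Inf (snd q))
      = (\<Sum>q\<in>p. if fst q \<in> E then content (snd q) else 0)"
    unfolding sum.inter_filter[OF \<open>finite p\<close>, symmetric]
    using tagged_division_of_real_snd(5)[OF assms] by (intro sum.cong) auto
  then show ?thesis by (auto simp: split_beta indicator_def intro!: sum.cong)
qed

lemma sum_straddle_le:
  fixes f g :: "real \<Rightarrow> real" and a b :: real
  assumes p: "p tagged_division_of {a..b}" and "a \<le> b" and "\<gamma> fine p" and "e \<ge> 0"
    and straddle: "\<And>x u v. x \<in> {a..b} \<Longrightarrow> x \<notin> E \<Longrightarrow> u \<le> x \<Longrightarrow> x \<le> v \<Longrightarrow> {u..v} \<subseteq> \<gamma> x \<Longrightarrow>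
      \<bar>f v - f u - (v - u) * g x\<bar> \<le> e * (v - u)"
  shows "\<bar>\<Sum>q\<in>{q\<in>p. fst q \<notin> E}. content (snd q) * g (fst q)
      - (f (Sup (snd q)) - f (Inf (snd q)))\<bar> \<le> e * (b - a)"
proof -
  have "finite p" using tagged_division_ofD(1)[OF p] .
  have summand: "\<bar>content K * g x - (f (Sup K) - f (Inf K))\<bar>
      \<le> e * content K" if xK: "(x, K) \<in> p" and "x \<notin> E" for x K
  proof -
    obtain u v where K: "K = {u..v}" "a \<le> u" "u \<le> x" "x \<le> v" "v \<le> b"
      using tagged_division_of_real_intervalE[OF p xK] .
    have "{u..v} \<subseteq> \<gamma> x" using fineD[OF \<open>\<gamma> fine p\<close> xK] K by simp
    then have "\<bar>f v - f u - (v - u) * g x\<bar> \<le> e * (v - u)"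
      using straddle[of x u v] \<open>x \<notin> E\<close> K by auto
    then show ?thesis using K by (simp add: abs_minus_commute mult.commute)
  qed
  have "\<bar>\<Sum>q\<in>{q\<in>p. fst q \<notin> E}. content (snd q) * g (fst q)
      - (f (Sup (snd q)) - f (Inf (snd q)))\<bar>
      \<le> (\<Sum>q\<in>{q\<in>p. fst q \<notin> E}. e * content (snd q))"
    using summand by (intro order_trans[OF sum_abs sum_mono]) auto
  also have "\<dots> \<le> (\<Sum>q\<in>p. e * content (snd q))"
    using \<open>finite p\<close> \<open>e \<ge> 0\<close> by (intro sum_mono2) auto
  also have "\<dots> = e * (b - a)"
    using additive_content_tagged_division[of p a b] p \<open>a \<le> b\<close>
    by (simp add: sum_distrib_left[symmetric] split_beta)
  finally show ?thesis .
qed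

lemma abs_cont_on_interval_negligible_tags:
  assumes ac: "abs_cont_on_interval a b f" and "\<epsilon> > 0" and "negligible E"
  obtains \<gamma> where "gauge \<gamma>"
    and "\<And>p. p tagged_division_of {a..b} \<Longrightarrow> \<gamma> fine p \<Longrightarrow>
      (\<Sum>q\<in>{q\<in>p. fst q \<in> E}. \<bar>f (Sup (snd q)) - f (Inf (snd q))\<bar>) < \<epsilon>"
proof -
  obtain \<delta> where "\<delta> > 0" and ac_small: "\<forall>(I :: (real \<times> real set) set) l r. finite I \<longrightarrow>
      (\<forall>i\<in>I. a \<le> l i \<and> l i \<le> r i \<and> r i \<le> b) \<longrightarrow>
      (\<forall>i\<in>I. \<forall>j\<in>I. i \<noteq> j \<longrightarrow> {l i<..<r i} \<inter> {l j<..<r j} = {}) \<longrightarrow>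
      (\<Sum>i\<in>I. r i - l i) < \<delta> \<longrightarrow> (\<Sum>i\<in>I. \<bar>f (r i) - f (l i)\<bar>) < \<epsilon>"
    using abs_cont_on_interval_family[OF ac \<open>\<epsilon> > 0\<close>] by (elim exE conjE)
  have "(indicator E has_integral (0::real)) (cbox a b)"
    using \<open>negligible E\<close> by (simp add: negligible_def)
  from has_integral[THEN iffD1, OF this, rule_format, OF \<open>\<delta> > 0\<close>]
  obtain \<gamma> where "gauge \<gamma>" and \<gamma>: "\<forall>p. p tagged_division_of cbox a b \<and> \<gamma> fine p \<longrightarrow>
      norm ((\<Sum>(x, K)\<in>p. content K *\<^sub>R (indicator E x :: real)) - 0) < \<delta>"
    by (elim exE conjE) (rule that)
  show thesis
  proof (rule that[OF \<open>gauge \<gamma>\<close>])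
    fix p assume p: "p tagged_division_of {a..b}" and "\<gamma> fine p"
    define p2 where "p2 = {q\<in>p. fst q \<in> E}"
    have "finite p2" using tagged_division_ofD(1)[OF p] by (simp add: p2_def)
    moreover have "\<forall>q\<in>p2. a \<le> Inf (snd q) \<and> Inf (snd q) \<le> Sup (snd q) \<and> Sup (snd q) \<le> b"
      using tagged_division_of_real_snd(2-4)[OF p] by (simp add: p2_def)
    moreover have "\<forall>q\<in>p2. \<forall>q'\<in>p2. q \<noteq> q' \<longrightarrow>
        {Inf (snd q)<..<Sup (snd q)} \<inter> {Inf (snd q')<..<Sup (snd q')} = {}"
      using tagged_division_of_real_disjoint[OF p] by (simp add: p2_def)
    moreover have "(\<Sum>q\<in>p2. Sup (snd q) - Inf (snd q)) < \<delta>"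
    proof -
      have "\<bar>\<Sum>(x, K)\<in>p. content K *\<^sub>R (indicator E x :: real)\<bar> < \<delta>"
        using \<gamma> p \<open>\<gamma> fine p\<close> by simp
      then show ?thesis
        using sum_tag_lengths_eq_indicator_sum[OF p] by (simp add: p2_def abs_less_iff)
    qed
    ultimately show "(\<Sum>q\<in>p2. \<bar>f (Sup (snd q)) - f (Inf (snd q))\<bar>) < \<epsilon>"
      using ac_small[THEN spec[where x = p2], THEN spec[where x = "\<lambda>q. Inf (snd q)"],
        THEN spec[where x = "\<lambda>q. Sup (snd q)"]] by blast
  qed
qed

lemma riemann_sum_minus_increment_split:
  fixes f g :: "real \<Rightarrow> real" and a b :: real
  assumes p: "p tagged_division_of {a..b}" and "a \<le> b"
  shows "(\<Sum>(x, K)\<in>p. content K *\<^sub>R (if x \<in> E then 0 else g x)) - (f b - f a)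
    = (\<Sum>q\<in>{q\<in>p. fst q \<notin> E}. content (snd q) * g (fst q) - (f (Sup (snd q)) - f (Inf (snd q))))
      - (\<Sum>q\<in>{q\<in>p. fst q \<in> E}. f (Sup (snd q)) - f (Inf (snd q)))"
proof -
  have "finite p" using tagged_division_ofD(1)[OF p] .
  define F where "F q = content (snd q) * (if fst q \<in> E then 0 else g (fst q))
    - (f (Sup (snd q)) - f (Inf (snd q)))" for q
  have "(\<Sum>(x, K)\<in>p. content K *\<^sub>R (if x \<in> E then 0 else g x)) - (f b - f a) = sum F p"
    unfolding F_def additive_tagged_division_1[OF \<open>a \<le> b\<close> p, symmetric]
    by (simp add: sum_subtractf split_beta)
  also have "\<dots> = sum F {q\<in>p. fst q \<notin> E} + sum F {q\<in>p. fst q \<in> E}"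
    using sum.inter_filter[OF \<open>finite p\<close>, of F "\<lambda>q. fst q \<notin> E"]
      sum.inter_filter[OF \<open>finite p\<close>, of F "\<lambda>q. fst q \<in> E"]
    by (simp add: sum.distrib[symmetric] if_distrib cong: if_cong)
  moreover have "sum F {q\<in>p. fst q \<notin> E}
      = (\<Sum>q\<in>{q\<in>p. fst q \<notin> E}. content (snd q) * g (fst q) - (f (Sup (snd q)) - f (Inf (snd q))))"
    by (rule sum.cong) (simp_all add: F_def)
  moreover have "sum F {q\<in>p. fst q \<in> E} = - (\<Sum>q\<in>{q\<in>p. fst q \<in> E}. f (Sup (snd q)) - f (Inf (snd q)))"
    by (simp add: F_def sum_negf[symmetric])
  ultimately show ?thesis by simp
qed

lemma abs_cont_on_interval_has_integral:
  fixes f g :: "real \<Rightarrow> real"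
  assumes "a \<le> b" and ac: "abs_cont_on_interval a b f" and "negligible E"
    and der: "\<And>x. x \<in> {a..b} - E \<Longrightarrow> (f has_real_derivative g x) (at x)"
  shows "(g has_integral (f b - f a)) {a..b}"
proof -
  (* Henstock's argument for g changed to 0 on E: the straddle estimate controls the tags
     outside E, absolute continuity the tags in E, whose intervals have small total length. *)
  define g0 where "g0 x = (if x \<in> E then 0 else g x)" for x
  have "(g0 has_integral (f b - f a)) (cbox a b)"
  proof (subst has_integral, intro allI impI)
    fix \<epsilon> :: real assume "\<epsilon> > 0"
    obtain \<gamma>1 where "gauge \<gamma>1" and \<gamma>1: "\<And>p. p tagged_division_of {a..b} \<Longrightarrow> \<gamma>1 fine p \<Longrightarrow>
        (\<Sum>q\<in>{q\<in>p. fst q \<in> E}. \<bar>f (Sup (snd q)) - f (Inf (snd q))\<bar>) < \<epsilon> / 2"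
      using abs_cont_on_interval_negligible_tags[OF ac half_gt_zero[OF \<open>\<epsilon> > 0\<close>] \<open>negligible E\<close>] by blast
    define e where "e = \<epsilon> / (2 * (b - a + 1))"
    have "e > 0" and "e * (b - a) < \<epsilon> / 2"
      using \<open>\<epsilon> > 0\<close> \<open>a \<le> b\<close> by (auto simp: e_def field_simps)
    obtain \<gamma>2 where "gauge \<gamma>2" and \<gamma>2: "\<And>x u v. x \<in> {a..b} - E \<Longrightarrow> u \<le> x \<Longrightarrow> x \<le> v \<Longrightarrow>
        {u..v} \<subseteq> \<gamma>2 x \<Longrightarrow> \<bar>f v - f u - (v - u) * g x\<bar> \<le> e * (v - u)"
      using gauge_straddle[OF der \<open>e > 0\<close>] by blast
    show "\<exists>\<gamma>. gauge \<gamma> \<and> (\<forall>p. p tagged_division_of cbox a b \<and> \<gamma> fine p \<longrightarrow>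
        norm ((\<Sum>(x, K)\<in>p. content K *\<^sub>R g0 x) - (f b - f a)) < \<epsilon>)"
    proof (intro exI conjI allI impI)
      show "gauge (\<lambda>x. \<gamma>1 x \<inter> \<gamma>2 x)" using \<open>gauge \<gamma>1\<close> \<open>gauge \<gamma>2\<close> by (rule gauge_Int)
      fix p assume "p tagged_division_of cbox a b \<and> (\<lambda>x. \<gamma>1 x \<inter> \<gamma>2 x) fine p"
      then have p: "p tagged_division_of {a..b}" and "\<gamma>1 fine p" "\<gamma>2 fine p"
        by (simp_all add: fine_Int)
      have "\<bar>\<Sum>q\<in>{q\<in>p. fst q \<notin> E}. content (snd q) * g (fst q) - (f (Sup (snd q)) - f (Inf (snd q)))\<bar>
          \<le> e * (b - a)"
        using \<gamma>2 by (intro sum_straddle_le[OF p \<open>a \<le> b\<close> \<open>\<gamma>2 fine p\<close> less_imp_le[OF \<open>e > 0\<close>]]) auto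
      moreover have "\<bar>\<Sum>q\<in>{q\<in>p. fst q \<in> E}. f (Sup (snd q)) - f (Inf (snd q))\<bar> < \<epsilon> / 2"
        using \<gamma>1[OF p \<open>\<gamma>1 fine p\<close>] sum_abs[of _ "{q\<in>p. fst q \<in> E}"] by (rule le_less_trans[rotated])
      ultimately show "norm ((\<Sum>(x, K)\<in>p. content K *\<^sub>R g0 x) - (f b - f a)) < \<epsilon>"
        unfolding g0_def riemann_sum_minus_increment_split[OF p \<open>a \<le> b\<close>]
        using \<open>e * (b - a) < \<epsilon> / 2\<close> by simp
    qed
  qed
  then have "(g0 has_integral (f b - f a)) {a..b}" by simp
  then show ?thesis
    by (rule has_integral_spike[OF \<open>negligible E\<close>, rotated]) (simp add: g0_def)
qed

lemma AE_lborel_obtain_negligible: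
  assumes "AE x in lborel. P x"
  obtains E where "negligible E" and "\<And>x. x \<notin> E \<Longrightarrow> P x"
proof -
  from assms obtain N where N: "{x \<in> space lborel. \<not> P x} \<subseteq> N" "emeasure lborel N = 0" "N \<in> sets lborel"
    by (rule AE_E)
  then have "negligible N"
    by (auto simp: negligible_iff_null_sets intro: null_sets_completionI null_setsI)
  with N show thesis using that by auto
qed

lemma AC_loc_integral_derivative:
  assumes "f \<in> AC_loc" and "AE x in lborel. (f has_real_derivative f' x) (at x)" and "a \<le> b"
  shows "integral {a..b} f' = f b - f a"
proof -
  obtain E where "negligible E" and der: "\<And>x. x \<notin> E \<Longrightarrow> (f has_real_derivative f' x) (at x)"
    using AE_lborel_obtain_negligible[OF assms(2)] by blast
  have "abs_cont_on_interval a b f"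
    using assms(1,3) by (simp add: AC_loc_def)
  from abs_cont_on_interval_has_integral[OF assms(3) this \<open>negligible E\<close>] der
  show ?thesis by (auto intro: integral_unique)
qed

lemma abs_diff_le_jordan_variation:
  assumes "a < b"
  shows "ereal \<bar>f b - f a\<bar> \<le> jordan_variation f"
proof -
  define x where "x = (\<lambda>i::nat. if i = 0 then a else b)"
  have "(1, x) \<in> {(n, x). n \<ge> 1 \<and> x 0 = a \<and> x n = b \<and> (\<forall>i<n. x i < x (Suc i))}"
    using assms by (simp add: x_def)
  then have "ereal \<bar>f b - f a\<bar> \<le> interval_variation f a b"
    unfolding interval_variation_def by (rule SUP_upper2) (simp add: x_def)
  also have "\<dots> \<le> jordan_variation f"
    unfolding jordan_variation_def by (rule SUP_upper2[of "(a, b)"]) (use assms in auto)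
  finally show ?thesis .
qed

lemma BV_bounded:
  assumes "f \<in> BV"
  obtains B where "\<And>x. \<bar>f x\<bar> \<le> B"
proof -
  have nonneg: "ereal 0 \<le> jordan_variation f"
    using abs_diff_le_jordan_variation[of 0 1 f] by (metis abs_ge_zero ereal_less_eq(3) order_trans zero_less_one)
  with assms obtain V where V: "jordan_variation f = ereal V"
    by (cases "jordan_variation f") (auto simp: BV_def)
  have osc: "\<bar>f x - f 0\<bar> \<le> V" for x
    using abs_diff_le_jordan_variation[of x 0 f] abs_diff_le_jordan_variation[of 0 x f] V nonneg
    by (cases x "0::real" rule: linorder_cases) (auto simp: abs_minus_commute)
  have "\<bar>f x\<bar> \<le> \<bar>f 0\<bar> + V" for x
    using osc[of x] abs_triangle_ineq2[of "f x" "f 0"] by linarith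
  then show thesis by (rule that)
qed

section \<open>The averaged kernel\<close>

lemma has_real_derivative_avg_kernel:
  assumes "continuous_on UNIV chi"
  shows "(avg_kernel chi m has_real_derivative (chi (u + real m / 2) - chi (u - real m / 2)) / real m) (at u)"
proof -
  define c where "c = real m / 2"
  define A where "A = u - c - 1"
  define \<Phi> where "\<Phi> x = integral {A..x} chi" for x
  have integrable: "chi integrable_on {a..b}" for a b
    using assms by (blast intro: integrable_continuous_real continuous_on_subset)
  have avg: "avg_kernel chi m y = (\<Phi> (y + c) - \<Phi> (y - c)) / real m" if "y \<in> ball u 1" for y
  proof -
    have "A \<le> y - c" "y - c \<le> y + c"
      using that by (auto simp: A_def c_def dist_real_def)
    then have "\<Phi> (y + c) - \<Phi> (y - c) = integral {y - c..y + c} chi"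
      using Henstock_Kurzweil_Integration.integral_combine[OF _ _ integrable]
      by (simp add: \<Phi>_def algebra_simps)
    also have "\<dots> = integral {- c..c} (\<lambda>v. chi (y + v))"
      using integral_shift_Icc_real[of "- c" c chi y] by (simp add: o_def add.commute)
    finally show ?thesis by (simp add: avg_kernel_def c_def)
  qed
  have \<Phi>: "(\<Phi> has_real_derivative chi x) (at x)" if "A < x" for x
  proof -
    have "(\<Phi> has_real_derivative chi x) (at x within {A..x + 1})"
      unfolding \<Phi>_def using that
      by (intro integral_has_real_derivative continuous_on_subset[OF assms]) auto
    then show ?thesis using that by (simp add: at_within_Icc_at)
  qed
  have "((\<lambda>y. \<Phi> (y + c)) has_real_derivative chi (u + c)) (at u)"
    using \<Phi>[of "u + c"] by (simp add: DERIV_shift A_def c_def)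
  moreover have "((\<lambda>y. \<Phi> (y - c)) has_real_derivative chi (u - c)) (at u)"
    using \<Phi>[of "u - c"] DERIV_shift[of \<Phi> "chi (u - c)" u "- c"] by (simp add: A_def)
  ultimately have "((\<lambda>y. (\<Phi> (y + c) - \<Phi> (y - c)) / real m) has_real_derivative
      (chi (u + c) - chi (u - c)) / real m) (at u)"
    by (intro DERIV_cdivide DERIV_diff)
  then show ?thesis unfolding c_def
    by (rule has_field_derivative_transform_within_open[of _ _ _ "ball u 1"]) (auto simp: avg c_def)
qed

lemma has_real_derivative_avg_kernel_sample:
  assumes "continuous_on UNIV chi" and "w > 0"
  shows "((\<lambda>s. avg_kernel chi m (w * s - y)) has_real_derivative
    w / real m * (chi (w * (s + real m / (2 * w)) - y) - chi (w * (s - real m / (2 * w)) - y))) (at s)"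
proof -
  have "w * (s + real m / (2 * w)) - y = w * s - y + real m / 2"
    and "w * (s - real m / (2 * w)) - y = w * s - y - real m / 2"
    using \<open>w > 0\<close> by (simp_all add: field_simps)
  moreover have "((\<lambda>s. avg_kernel chi m (w * s - y)) has_real_derivative
      (chi (w * s - y + real m / 2) - chi (w * s - y - real m / 2)) / real m * w) (at s)"
    by (rule DERIV_chain2[OF has_real_derivative_avg_kernel[OF assms(1)]]) (auto intro!: derivative_eq_intros)
  ultimately show ?thesis
    by (simp only:) (simp add: mult.commute)
qed

lemma abs_avg_kernel_le:
  assumes "continuous_on UNIV chi"
  shows "\<bar>avg_kernel chi m u\<bar> \<le> integral {- real m / 2..real m / 2} (\<lambda>v. \<bar>chi (u + v)\<bar>) / real m"
proof -
  have "continuous_on UNIV (\<lambda>v. chi (u + v))"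
    by (intro continuous_on_compose2[OF assms] continuous_intros) auto
  then have "(\<lambda>v. chi (u + v)) integrable_on {a..b}" and "(\<lambda>v. \<bar>chi (u + v)\<bar>) integrable_on {a..b}" for a b
    by (auto intro!: integrable_continuous_real continuous_on_rabs elim: continuous_on_subset)
  from Henstock_Kurzweil_Integration.integral_norm_bound_integral[OF this]
  have "\<bar>integral {- real m / 2..real m / 2} (\<lambda>v. chi (u + v))\<bar>
      \<le> integral {- real m / 2..real m / 2} (\<lambda>v. \<bar>chi (u + v)\<bar>)"
    by simp
  then show ?thesis
    unfolding avg_kernel_def by (simp add: abs_mult divide_right_mono)
qed

lemma kernel_chi2D:
  assumes "kernel_chi2 chi"
  shows kernel_chi2_summable: "(\<lambda>k::int. \<bar>chi (u - real_of_int k)\<bar>) summable_on UNIV"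
    and kernel_chi2_bounded: "\<exists>M. \<forall>u. (\<Sum>\<^sub>\<infinity>k::int. \<bar>chi (u - real_of_int k)\<bar>) \<le> M"
    and kernel_chi2_uniform_limit: "compact C \<Longrightarrow>
      uniform_limit C (\<lambda>n u. \<Sum>k\<in>{- int n..int n}. \<bar>chi (u - real_of_int k)\<bar>)
        (\<lambda>u. \<Sum>\<^sub>\<infinity>k::int. \<bar>chi (u - real_of_int k)\<bar>) sequentially"
  using assms unfolding kernel_chi2_def by blast+

lemma summable_abs_avg_kernel:
  assumes "continuous_on UNIV chi" and "kernel_chi2 chi" and "m \<ge> 1"
  shows "(\<lambda>k::int. \<bar>avg_kernel chi m (u - real_of_int k)\<bar>) summable_on UNIV"
proof (rule nonneg_bdd_above_summable_on)
  obtain M where M: "\<And>u. (\<Sum>\<^sub>\<infinity>k::int. \<bar>chi (u - real_of_int k)\<bar>) \<le> M"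
    using kernel_chi2_bounded[OF assms(2)] by blast
  define c where "c = real m / 2"
  have integrable: "(\<lambda>v. \<bar>chi (x + v - y)\<bar>) integrable_on {- c..c}" for x y
    by (intro integrable_continuous_real continuous_on_rabs continuous_on_compose2[OF assms(1)])
       (auto intro!: continuous_intros)
  show "bdd_above (sum (\<lambda>k. \<bar>avg_kernel chi m (u - real_of_int k)\<bar>) ` {F. F \<subseteq> UNIV \<and> finite F})"
  proof (rule bdd_aboveI2)
    fix F :: "int set" assume "F \<in> {F. F \<subseteq> UNIV \<and> finite F}"
    then have "finite F" by simp
    have "(\<Sum>k\<in>F. \<bar>avg_kernel chi m (u - real_of_int k)\<bar>)
        \<le> (\<Sum>k\<in>F. integral {- c..c} (\<lambda>v. \<bar>chi (u + v - real_of_int k)\<bar>) / real m)"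
    proof (rule sum_mono)
      fix k :: int
      show "\<bar>avg_kernel chi m (u - real_of_int k)\<bar>
          \<le> integral {- c..c} (\<lambda>v. \<bar>chi (u + v - real_of_int k)\<bar>) / real m"
        using abs_avg_kernel_le[OF assms(1), of m "u - real_of_int k"] by (simp add: c_def diff_add_eq)
    qed
    also have "\<dots> = integral {- c..c} (\<lambda>v. \<Sum>k\<in>F. \<bar>chi (u + v - real_of_int k)\<bar>) / real m"
      using integrable by (simp add: integral_sum[OF \<open>finite F\<close>] sum_divide_distrib)
    also have "\<dots> \<le> integral {- c..c} (\<lambda>v. M) / real m"
    proof (intro divide_right_mono integral_le)
      show "(\<lambda>v. \<Sum>k\<in>F. \<bar>chi (u + v - real_of_int k)\<bar>) integrable_on {- c..c}"
        using integrable by (intro integrable_sum[OF \<open>finite F\<close>])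
      show "(\<Sum>k\<in>F. \<bar>chi (u + v - real_of_int k)\<bar>) \<le> M" for v
        using finite_sum_le_infsum[OF kernel_chi2_summable[OF assms(2)] \<open>finite F\<close>] M[of "u + v"]
        by (meson abs_ge_zero order_trans subset_UNIV)
    qed auto
    also have "\<dots> = M"
      using \<open>m \<ge> 1\<close> by (simp add: c_def)
    finally show "(\<Sum>k\<in>F. \<bar>avg_kernel chi m (u - real_of_int k)\<bar>) \<le> M" .
  qed
qed auto

section \<open>Sampling series\<close>

definition gen_sampling :: "(real \<Rightarrow> real) \<Rightarrow> real \<Rightarrow> (real \<Rightarrow> real) \<Rightarrow> real \<Rightarrow> real" where
  "gen_sampling chi w f t = (\<Sum>\<^sub>\<infinity>k::int. f (real_of_int k / w) * chi (w * t - real_of_int k))"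

lemma has_sum_gen_sampling:
  assumes "kernel_chi2 chi" and "\<And>x. \<bar>f x\<bar> \<le> B"
  shows "((\<lambda>k. f (real_of_int k / w) * chi (w * t - real_of_int k)) has_sum gen_sampling chi w f t) UNIV"
proof -
  have "(\<lambda>k. f (real_of_int k / w) * chi (w * t - real_of_int k)) summable_on UNIV"
    by (rule summable_on_dominated[OF summable_on_cmult_right[OF kernel_chi2_summable[OF assms(1), of "w * t"], of B]])
       (simp add: abs_mult assms(2) mult_right_mono)
  then show ?thesis by (simp add: gen_sampling_def)
qed

lemma uniform_limit_gen_sampling:
  assumes "kernel_chi2 chi" and "\<And>x. \<bar>f x\<bar> \<le> B" and "bounded S"
  shows "uniform_limit S (\<lambda>n t. \<Sum>k\<in>{- int n..int n}. f (real_of_int k / w) * chi (w * t - real_of_int k))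
    (gen_sampling chi w f) sequentially"
proof -
  have "compact (closure ((\<lambda>t. w * t) ` S))"
    using bounded_scaling[OF assms(3), of w] by simp
  then have "uniform_limit S (\<lambda>n t. \<Sum>k\<in>{- int n..int n}. \<bar>chi (w * t - real_of_int k)\<bar>)
      (\<lambda>t. \<Sum>\<^sub>\<infinity>k::int. \<bar>chi (w * t - real_of_int k)\<bar>) sequentially"
    by (rule uniform_limit_compose'[OF kernel_chi2_uniform_limit[OF assms(1)]])
       (auto intro: closure_subset[THEN subsetD])
  then have "uniform_limit S (\<lambda>n t. \<Sum>k\<in>{- int n..int n}. B * \<bar>chi (w * t - real_of_int k)\<bar>)
      (\<lambda>t. \<Sum>\<^sub>\<infinity>k::int. B * \<bar>chi (w * t - real_of_int k)\<bar>) sequentially"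
    unfolding sum_distrib_left[symmetric] infsum_cmult_right' by (intro uniform_limit_intros)
  then show ?thesis
    unfolding gen_sampling_def
    by (rule uniform_limit_symmetric_partial_sums_dominated[rotated 2])
       (auto simp: abs_mult assms(2) mult_right_mono
         intro: summable_on_cmult_right kernel_chi2_summable[OF assms(1)])
qed

lemma has_real_derivative_Sbar:
  assumes "continuous_on UNIV chi" and "kernel_chi2 chi" and "\<And>x. \<bar>f x\<bar> \<le> B"
    and "w > 0" and "m \<ge> 1"
  shows "(Sbar chi m w f has_real_derivative w / real m *
    (gen_sampling chi w f (t + real m / (2 * w)) - gen_sampling chi w f (t - real m / (2 * w)))) (at t)"
proof -
  define c where "c = real m / (2 * w)"
  define a where "a k s = f (real_of_int k / w) * avg_kernel chi m (w * s - real_of_int k)" for k :: int and s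
  define a' where "a' k s = f (real_of_int k / w) *
    (w / real m * (chi (w * (s + c) - real_of_int k) - chi (w * (s - c) - real_of_int k)))" for k :: int and s
  have "(a k has_real_derivative a' k s) (at s)" for k s
    unfolding a_def a'_def c_def by (intro DERIV_cmult has_real_derivative_avg_kernel_sample assms(1,4))
  moreover have "(\<lambda>k. a k s) summable_on UNIV" for s
    by (rule summable_on_dominated[OF summable_on_cmult_right[OF summable_abs_avg_kernel[OF assms(1,2,5), of "w * s"], of B]])
       (simp add: a_def abs_mult assms(3) mult_right_mono)
  moreover have "uniform_limit (ball t 1) (\<lambda>n s. \<Sum>k\<in>{- int n..int n}. a' k s)
      (\<lambda>s. w / real m * (gen_sampling chi w f (s + c) - gen_sampling chi w f (s - c))) sequentially"
  proof -
    have shifted: "uniform_limit (ball t 1)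
        (\<lambda>n s. \<Sum>k\<in>{- int n..int n}. f (real_of_int k / w) * chi (w * (s + d) - real_of_int k))
        (\<lambda>s. gen_sampling chi w f (s + d)) sequentially" for d
      by (rule uniform_limit_compose'[OF uniform_limit_gen_sampling[where f = f and w = w, OF assms(2,3) bounded_ball[of "t + d" 1]]])
         (auto simp: dist_real_def)
    have "(\<Sum>k\<in>K. a' k s) = w / real m *
        ((\<Sum>k\<in>K. f (real_of_int k / w) * chi (w * (s + c) - real_of_int k))
          - (\<Sum>k\<in>K. f (real_of_int k / w) * chi (w * (s - c) - real_of_int k)))" for K s
      by (simp add: a'_def sum_distrib_left sum_subtractf algebra_simps)
    then show ?thesis
      using uniform_limit_intros(11)[OF uniform_limit_minus[OF shifted[of c] shifted[of "- c"]], of "w / real m"]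
      by simp
  qed
  ultimately have "((\<lambda>s. \<Sum>\<^sub>\<infinity>k. a k s) has_real_derivative
      w / real m * (gen_sampling chi w f (t + c) - gen_sampling chi w f (t - c))) (at t)"
    by (intro has_real_derivative_symmetric_series[where S = "ball t 1"]) auto
  moreover have "Sbar chi m w f = (\<lambda>s. \<Sum>\<^sub>\<infinity>k. a k s)"
    by (simp add: fun_eq_iff Sbar_def a_def)
  ultimately show ?thesis
    by (simp add: c_def)
qed

lemma Kant_eq_gen_sampling_diff:
  assumes "kernel_chi2 chi" and "\<And>x. \<bar>f x\<bar> \<le> B" and "w > 0"
    and "\<And>a b. a \<le> b \<Longrightarrow> integral {a..b} g = f b - f a"
  shows "Kant chi w g t = w * (gen_sampling chi w f (t + 1 / w) - gen_sampling chi w f t)"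
proof -
  have "bij_betw (\<lambda>k::int. k + 1) UNIV UNIV"
    by (rule bij_betwI[of _ _ _ "\<lambda>k. k - 1"]) auto
  from has_sum_reindex_bij_betw[OF this, THEN iffD2,
      OF has_sum_gen_sampling[where f = f and w = w and t = "t + 1 / w", OF assms(1,2)]]
  have "((\<lambda>k. f (real_of_int (k + 1) / w) * chi (w * (t + 1 / w) - real_of_int (k + 1)))
      has_sum gen_sampling chi w f (t + 1 / w)) UNIV" .
  moreover have "f (real_of_int (k + 1) / w) * chi (w * (t + 1 / w) - real_of_int (k + 1))
      = f ((real_of_int k + 1) / w) * chi (w * t - real_of_int k)" for k
    using \<open>w > 0\<close> by (simp add: distrib_left)
  ultimately have shifted: "((\<lambda>k. f ((real_of_int k + 1) / w) * chi (w * t - real_of_int k))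
      has_sum gen_sampling chi w f (t + 1 / w)) UNIV"
    by (simp only:)
  have increment: "w * integral {real_of_int k / w..(real_of_int k + 1) / w} g * chi (w * t - real_of_int k)
      = w * (f ((real_of_int k + 1) / w) * chi (w * t - real_of_int k)
        - f (real_of_int k / w) * chi (w * t - real_of_int k))" for k
  proof -
    have "integral {real_of_int k / w..(real_of_int k + 1) / w} g
        = f ((real_of_int k + 1) / w) - f (real_of_int k / w)"
      using assms(4) \<open>w > 0\<close> by (simp add: divide_right_mono)
    then show ?thesis by (simp only:) (simp add: algebra_simps)
  qed
  have "((\<lambda>k. w * (f ((real_of_int k + 1) / w) * chi (w * t - real_of_int k)
      - f (real_of_int k / w) * chi (w * t - real_of_int k)))
      has_sum w * (gen_sampling chi w f (t + 1 / w) - gen_sampling chi w f t)) UNIV"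
    by (intro has_sum_cmult_right has_sum_diff shifted
        has_sum_gen_sampling[where f = f and w = w and t = t, OF assms(1,2)])
  then show ?thesis
    unfolding Kant_def increment[symmetric] by (rule infsumI)
qed

lemma sum_atLeast1_telescope:
  fixes F :: "real \<Rightarrow> real"
  shows "(\<Sum>i=1..n. F (real i) - F (real i - 1)) = F (real n) - F 0"
  by (induction n) (simp_all add: algebra_simps)

lemma sum_Kant_shifts:
  assumes "kernel_chi2 chi" and "\<And>x. \<bar>f x\<bar> \<le> B" and "w > 0"
    and "\<And>a b. a \<le> b \<Longrightarrow> integral {a..b} g = f b - f a"
  shows "(\<Sum>i=1..m. Kant chi w g (t - (real m - 2 * (real i - 1)) / (2 * w)))
    = w * (gen_sampling chi w f (t + real m / (2 * w)) - gen_sampling chi w f (t - real m / (2 * w)))"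
proof -
  define G where "G s = gen_sampling chi w f (t - real m / (2 * w) + s / w)" for s
  have Kant_i: "Kant chi w g (t - (real m - 2 * (real i - 1)) / (2 * w)) = w * (G (real i) - G (real i - 1))"
    for i :: nat
  proof -
    have shift: "t - real m / (2 * w) + (real i - 1) / w = t - (real m - 2 * (real i - 1)) / (2 * w)"
      and shift': "t - real m / (2 * w) + real i / w = t - (real m - 2 * (real i - 1)) / (2 * w) + 1 / w"
      using \<open>w > 0\<close> by (simp_all add: field_simps)
    show ?thesis
      unfolding G_def shift shift' by (rule Kant_eq_gen_sampling_diff[OF assms])
  qed
  have "(\<Sum>i=1..m. Kant chi w g (t - (real m - 2 * (real i - 1)) / (2 * w)))
      = w * (\<Sum>i=1..m. G (real i) - G (real i - 1))"
    unfolding Kant_i by (simp add: sum_distrib_left)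
  also have "\<dots> = w * (G (real m) - G 0)"
    by (simp only: sum_atLeast1_telescope)
  also have "\<dots> = w * (gen_sampling chi w f (t + real m / (2 * w)) - gen_sampling chi w f (t - real m / (2 * w)))"
  proof -
    have "t - real m / (2 * w) + real m / w = t + real m / (2 * w)"
      using \<open>w > 0\<close> by (simp add: field_simps)
    then show ?thesis unfolding G_def by (simp add: add.commute)
  qed
  finally show ?thesis .
qed

theorem proposition3p2:
  fixes chi f f' :: "real \<Rightarrow> real" and w :: real and m :: nat and t :: real
  assumes "kernel_chi1 chi" and "kernel_chi2 chi"
    and "f \<in> AC"
    and "AE x in lborel. (f has_real_derivative f' x) (at x)"
    and "w > 0" and "m \<ge> 1"
  shows "((\<lambda>s. Sbar chi m w f s) has_real_derivative
           (1 / real m) * (\<Sum>i=1..m. Kant chi w f' (t - (real m - 2 * (real i - 1)) / (2 * w)))) (at t)"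
proof -
  have "continuous_on UNIV chi" using assms(1) by (simp add: kernel_chi1_def)
  obtain B where B: "\<And>x. \<bar>f x\<bar> \<le> B"
    using BV_bounded assms(3) by (auto simp: AC_def)
  have "integral {a..b} f' = f b - f a" if "a \<le> b" for a b
    using AC_loc_integral_derivative[OF _ assms(4) that] assms(3) by (simp add: AC_def)
  from sum_Kant_shifts[where m = m and t = t, OF assms(2) B \<open>w > 0\<close> this]
    has_real_derivative_Sbar[where f = f and t = t, OF \<open>continuous_on UNIV chi\<close> assms(2) B \<open>w > 0\<close> \<open>m \<ge> 1\<close>]
  show ?thesis by simp
qed

end
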